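(* Consider the algorithm described in the context, and suppose it does not terminate finitely. Then for every $k\in\mathbb{N}$, $$\Delta q_k(s_k,\tau_k)\ge \frac{\sigma_u\tau_k}{\alpha_k}\|s_k\|_2^2+\sigma_c\big(\|c_k\|_2-\|c_k+J_kv_k\|_2\big)>0$$ and $$D_{\Phi_{\tau_k}}(x_k,s_k)\le -\frac{\sigma_u\tau_k}{\alpha_k}\|s_k\|_2^2-\sigma_c\big(\|c_k\|_2-\|c_k+J_kv_k\|_2\big)<0,$$ where $D_{\Phi_\tau}(x,s):=\lim_{t\searrow0}(\Phi_\tau(x+ts)-\Phi_\tau(x))/t$.
   Context: Problem: $\min_{x\in\mathbb{R}^n} f(x)+r(x)$ subject to $c(x)=0$, where $f:\mathbb{R}^n\to\mathbb{R}$ and $c:\mathbb{R}^n\to\mathbb{R}^m$ ($m\le n$) are continuously differentiable and $r:\mathbb{R}^n\to\mathbb{R}_{\ge 0}$ is convex. Write $g(x)=\nabla f(x)$, $J(x)=\nabla c(x)^T$, and $f_k=f(x_k)$, $g_k=g(x_k)$, $c_k=c(x_k)$, $J_k=J(x_k)$, $r_k=r(x_k)$. All norms are Euclidean. Merit function: $\Phi_\tau(x)=\tau(f(x)+r(x))+\|c(x)\|_2$. Algorithm: inputs $x_0$, $\alpha_0>0$, $\tau_{-1}>0$; constants $\kappa_v>0$, $\sigma_c,\epsilon_\tau,\xi,\eta\in(0,1)$, $\sigma_u\in(0,1/2]$, $\bar\sigma_u:=\sigma_u+\tfrac12$. For $k=0,1,\dots$: 1. If $J_k^Tc_k\ne0$,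 compute $v_k$ with $v_k\in\mathrm{Range}(J_k^T)$, $\|v_k\|_2\le\kappa_v\alpha_k\|J_k^Tc_k\|_2$, $\|c_k+J_kv_k\|_2\le\|c_k+J_kv_k^c\|_2$, where $v_k^c=-\beta_k^cJ_k^Tc_k$ with $\beta_k^c$ minimizing $\tfrac12\|c_k-\beta J_kJ_k^Tc_k\|_2^2$ over $0\le\beta\le\kappa_v\alpha_k$. Otherwise set $v_k=0$, and if $c_k\ne0$ terminate. 2. Let $u_k$ be the unique minimizer of $g_k^Tu+\tfrac1{2\alpha_k}\|u\|_2^2+r(x_k+v_k+u)$ subject to $J_ku=0$; set $s_k=v_k+u_k$. If $s_k=0$, terminate. 3. Let $D_k:=g_k^Ts_k+\bar\sigma_u\|s_k\|_2^2/\alpha_k+r(x_k+s_k)-r_k$; $\tau_{k,\mathrm{trial}}=\infty$ if $D_k\le0$, else $\tau_{k,\mathrm{trial}}=(1-\sigma_c)(\|c_k\|_2-\|c_k+J_kv_k\|_2)/D_k$. Set $\tau_k=\tau_{k-1}$ if $\tau_{k-1}\le\tau_{k,\mathrm{trial}}$, else $\tau_k=\min\{(1-\epsilon_\tau)\tau_{k-1},\tau_{k,\mathrm{trial}}\}$. 4. With $\Delta q_k(s,\tau):=-\tau(g_k^Ts+\tfrac1{2\alpha_k}\|s\|_2^2+r(x_k+s)-r_k)+\|c_k\|_2-\|c_k+J_ks\|_2$: if $\Phi_{\tau_k}(x_k+s_k)\le\Phi_{\tau_k}(x_k)-\eta\Delta q_k(s_k,\tau_k)$ set $x_{k+1}=x_k+s_k$,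 $\alpha_{k+1}=\alpha_k$; else $x_{k+1}=x_k$, $\alpha_{k+1}=\xi\alpha_k$. Standing assumption: there is an open convex set $\mathcal X$ containing all iterates $x_k$ and trial points $x_k+s_k$ such that $f$ is bounded below on $\mathcal X$, $\nabla f$ is bounded and Lipschitz continuous on $\mathcal X$, $c$ is bounded on $\mathcal X$, $J$ is bounded and Lipschitz continuous on $\mathcal X$, and all subgradients of $r$ at points of $\mathcal X$ are uniformly bounded in norm. *)

theory Defs
  imports "HOL-Analysis.Analysis"
begin

text \<open>Vectors in R^n are real^'n, constraint values in R^m are real^'m,
  the Jacobian J(x) is an m x n matrix real^'n^'m.
  J(x)^T c(x) is transpose (J x) *v c x, and J(x) s is J x *v s.\<close>

definition merit :: "(real^'n \<Rightarrow> real) \<Rightarrow> (real^'n \<Rightarrow> real) \<Rightarrow> (real^'n \<Rightarrow> real^'m)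
    \<Rightarrow> real \<Rightarrow> real^'n \<Rightarrow> real" where
  "merit f r c \<tau> x = \<tau> * (f x + r x) + norm (c x)"

definition dq :: "(real^'n \<Rightarrow> real^'n) \<Rightarrow> (real^'n \<Rightarrow> real) \<Rightarrow> (real^'n \<Rightarrow> real^'m)
    \<Rightarrow> (real^'n \<Rightarrow> real^'n^'m) \<Rightarrow> real \<Rightarrow> real^'n \<Rightarrow> real^'n \<Rightarrow> real \<Rightarrow> real" where
  "dq g r c J \<alpha> x s \<tau> =
     - \<tau> * (g x \<bullet> s + (1 / (2 * \<alpha>)) * (norm s)^2 + r (x + s) - r x)
     + norm (c x) - norm (c x + J x *v s)"

definition is_subgradient :: "(real^'n \<Rightarrow> real) \<Rightarrow> real^'n \<Rightarrow> real^'n \<Rightarrow> bool" where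
  "is_subgradient r x d \<longleftrightarrow> (\<forall>y. r y \<ge> r x + d \<bullet> (y - x))"

definition problem_data :: "(real^'n \<Rightarrow> real) \<Rightarrow> (real^'n \<Rightarrow> real^'n) \<Rightarrow> (real^'n \<Rightarrow> real^'m)
    \<Rightarrow> (real^'n \<Rightarrow> real^'n^'m) \<Rightarrow> (real^'n \<Rightarrow> real) \<Rightarrow> bool" where
  "problem_data f g c J r \<longleftrightarrow>
     (\<forall>x. (f has_derivative (\<lambda>h. g x \<bullet> h)) (at x)) \<and> continuous_on UNIV g \<and>
     (\<forall>x. (c has_derivative (\<lambda>h. J x *v h)) (at x)) \<and> continuous_on UNIV J \<and>
     CARD('m) \<le> CARD('n) \<and> convex_on UNIV r \<and> (\<forall>x. r x \<ge> 0)"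

definition standing_assumption :: "(real^'n \<Rightarrow> real) \<Rightarrow> (real^'n \<Rightarrow> real^'n) \<Rightarrow> (real^'n \<Rightarrow> real^'m)
    \<Rightarrow> (real^'n \<Rightarrow> real^'n^'m) \<Rightarrow> (real^'n \<Rightarrow> real) \<Rightarrow> (nat \<Rightarrow> real^'n) \<Rightarrow> (nat \<Rightarrow> real^'n) \<Rightarrow> bool" where
  "standing_assumption f g c J r xs ss \<longleftrightarrow>
     (\<exists>X. open X \<and> convex X \<and> (\<forall>k. xs k \<in> X \<and> xs k + ss k \<in> X) \<and>
        bdd_below (f ` X) \<and> bounded (g ` X) \<and> (\<exists>L. L-lipschitz_on X g) \<and>
        bounded (c ` X) \<and> bounded (J ` X) \<and> (\<exists>L. L-lipschitz_on X J) \<and>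
        (\<exists>B. \<forall>x\<in>X. \<forall>d. is_subgradient r x d \<longrightarrow> norm d \<le> B))"

definition normal_step_ok :: "(real^'n \<Rightarrow> real^'m) \<Rightarrow> (real^'n \<Rightarrow> real^'n^'m) \<Rightarrow> real
    \<Rightarrow> real \<Rightarrow> real^'n \<Rightarrow> real^'n \<Rightarrow> bool" where
  "normal_step_ok c J \<kappa>v \<alpha> x v \<longleftrightarrow>
     (let JTc = transpose (J x) *v c x in
      if JTc \<noteq> 0 then
        (\<exists>w. v = transpose (J x) *v w) \<and>
        norm v \<le> \<kappa>v * \<alpha> * norm JTc \<and>
        (\<exists>\<beta>. 0 \<le> \<beta> \<and> \<beta> \<le> \<kappa>v * \<alpha> \<and>
           (\<forall>\<beta>'. 0 \<le> \<beta>' \<and> \<beta>' \<le> \<kappa>v * \<alpha> \<longrightarrow>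
              (1/2) * (norm (c x - \<beta> *\<^sub>R (J x *v JTc)))^2 \<le> (1/2) * (norm (c x - \<beta>' *\<^sub>R (J x *v JTc)))^2) \<and>
           norm (c x + J x *v v) \<le> norm (c x + J x *v (- \<beta> *\<^sub>R JTc)))
      else v = 0)"

definition tangential_step_ok :: "(real^'n \<Rightarrow> real^'n) \<Rightarrow> (real^'n \<Rightarrow> real) \<Rightarrow> (real^'n \<Rightarrow> real^'n^'m)
    \<Rightarrow> real \<Rightarrow> real^'n \<Rightarrow> real^'n \<Rightarrow> real^'n \<Rightarrow> bool" where
  "tangential_step_ok g r J \<alpha> x v u \<longleftrightarrow>
     (let obj = (\<lambda>w. g x \<bullet> w + (1 / (2 * \<alpha>)) * (norm w)^2 + r (x + v + w)) in
      J x *v u = 0 \<and> (\<forall>w. J x *v w = 0 \<and> w \<noteq> u \<longrightarrow> obj u < obj w))"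

definition tau_trial :: "(real^'n \<Rightarrow> real^'n) \<Rightarrow> (real^'n \<Rightarrow> real) \<Rightarrow> (real^'n \<Rightarrow> real^'m)
    \<Rightarrow> (real^'n \<Rightarrow> real^'n^'m) \<Rightarrow> real \<Rightarrow> real \<Rightarrow> real \<Rightarrow> real^'n \<Rightarrow> real^'n \<Rightarrow> real^'n \<Rightarrow> ereal" where
  "tau_trial g r c J \<sigma>c \<sigma>u \<alpha> x v s =
     (let D = g x \<bullet> s + (\<sigma>u + 1/2) * (norm s)^2 / \<alpha> + r (x + s) - r x in
      if D \<le> 0 then \<infinity>
      else ereal ((1 - \<sigma>c) * (norm (c x) - norm (c x + J x *v v)) / D))"

definition tau_update :: "real \<Rightarrow> real \<Rightarrow> ereal \<Rightarrow> real" where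
  "tau_update \<epsilon>\<tau> \<tau>prev trial =
     (if ereal \<tau>prev \<le> trial then \<tau>prev else min ((1 - \<epsilon>\<tau>) * \<tau>prev) (real_of_ereal trial))"

text \<open>A run of the algorithm: sequences x, alpha, tau (tau_{-1} = tau0), v, u, s.\<close>
definition alg_run :: "(real^'n \<Rightarrow> real) \<Rightarrow> (real^'n \<Rightarrow> real^'n) \<Rightarrow> (real^'n \<Rightarrow> real^'m)
    \<Rightarrow> (real^'n \<Rightarrow> real^'n^'m) \<Rightarrow> (real^'n \<Rightarrow> real)
    \<Rightarrow> real \<Rightarrow> real \<Rightarrow> real \<Rightarrow> real \<Rightarrow> real \<Rightarrow> real
    \<Rightarrow> real^'n \<Rightarrow> real \<Rightarrow> real
    \<Rightarrow> (nat \<Rightarrow> real^'n) \<Rightarrow> (nat \<Rightarrow> real) \<Rightarrow> (nat \<Rightarrow> real)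
    \<Rightarrow> (nat \<Rightarrow> real^'n) \<Rightarrow> (nat \<Rightarrow> real^'n) \<Rightarrow> (nat \<Rightarrow> real^'n) \<Rightarrow> bool" where
  "alg_run f g c J r \<kappa>v \<sigma>c \<epsilon>\<tau> \<xi> \<eta> \<sigma>u x0 \<alpha>0 \<tau>0 x \<alpha> \<tau> v u s \<longleftrightarrow>
     x 0 = x0 \<and> \<alpha> 0 = \<alpha>0 \<and>
     (\<forall>k. normal_step_ok c J \<kappa>v (\<alpha> k) (x k) (v k) \<and>
          tangential_step_ok g r J (\<alpha> k) (x k) (v k) (u k) \<and>
          s k = v k + u k \<and>
          \<tau> k = tau_update \<epsilon>\<tau> (if k = 0 then \<tau>0 else \<tau> (k - 1))
                   (tau_trial g r c J \<sigma>c \<sigma>u (\<alpha> k) (x k) (v k) (s k)) \<and>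
          (if merit f r c (\<tau> k) (x k + s k)
                \<le> merit f r c (\<tau> k) (x k) - \<eta> * dq g r c J (\<alpha> k) (x k) (s k) (\<tau> k)
           then x (Suc k) = x k + s k \<and> \<alpha> (Suc k) = \<alpha> k
           else x (Suc k) = x k \<and> \<alpha> (Suc k) = \<xi> * \<alpha> k))"

text \<open>The algorithm does not terminate finitely: it never stops in Step 1
  (J^T c = 0 with c \<noteq> 0) nor in Step 2 (s = 0).\<close>
definition no_termination :: "(real^'n \<Rightarrow> real^'m) \<Rightarrow> (real^'n \<Rightarrow> real^'n^'m)
    \<Rightarrow> (nat \<Rightarrow> real^'n) \<Rightarrow> (nat \<Rightarrow> real^'n) \<Rightarrow> bool" where
  "no_termination c J x s \<longleftrightarrow>
     (\<forall>k. (transpose (J (x k)) *v c (x k) = 0 \<longrightarrow> c (x k) = 0) \<and> s k \<noteq> 0)"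

end

theory Submission
  imports Defs
begin

(*
  The tangential step u_k minimizes a strongly convex proximal model over the null space of J_k;
  comparing it with the shrunken steps t u_k (0 <= t < 1) and letting t -> 1 gives
  g_k^T u_k + |u_k|^2 / alpha_k + r(x_k + v_k + u_k) - r(x_k + v_k) <= 0. The Cauchy condition
  makes the normal step reduce the linearized infeasibility, strictly unless v_k = 0. Hence D_k > 0
  forces |c_k| - |c_k + J_k v_k| > 0, and the merit parameter update yields
  tau_k D_k <= (1 - sigma_c) (|c_k| - |c_k + J_k v_k|), which rearranges to the lower bound on
  Delta q_k. Along the ray x + t s the merit function splits into the differentiable part tau f,
  the convex function t |-> tau r(x + t s) + |c(x) + t J(x) s|, whose right difference quotients
  decrease to a limit bounded by the secant slope over [0, 1], and the o(t) error of linearizing c.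
  So its directional derivative is at most -Delta q_k(s_k, tau_k) - tau_k |s_k|^2 / (2 alpha_k).
*)

lemma convex_on_affine_comp:
  fixes F :: "'b::real_vector \<Rightarrow> real"
  assumes F: "convex_on UNIV F" and L: "linear L"
  shows "convex_on UNIV (\<lambda>w. F (p + L w))"
proof (rule convex_onI)
  fix t :: real and w z :: 'a
  assume "0 < t" "t < 1"
  have "p + L ((1 - t) *\<^sub>R w + t *\<^sub>R z) = (1 - t) *\<^sub>R (p + L w) + t *\<^sub>R (p + L z)"
    by (simp add: linear_add[OF L] linear_diff[OF L] linear_scale[OF L] scaleR_diff_left scaleR_add_right)
  then show "F (p + L ((1 - t) *\<^sub>R w + t *\<^sub>R z)) \<le> (1 - t) * F (p + L w) + t * F (p + L z)"
    using convex_onD[OF F, of t] \<open>0 < t\<close> \<open>t < 1\<close> by simp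
qed simp

lemma convex_on_UNIV_norm: "convex_on UNIV (norm :: 'a::real_normed_vector \<Rightarrow> real)"
  using convex_on_dist[of UNIV 0] by (simp add: dist_norm)

lemma convex_right_slope_tendsto:
  fixes h :: "real \<Rightarrow> real"
  assumes h: "convex_on UNIV h"
  shows "\<exists>L. ((\<lambda>t. (h t - h 0) / t) \<longlongrightarrow> L) (at_right 0) \<and> L \<le> h 1 - h 0"
proof -
  let ?q = "\<lambda>t. (h t - h 0) / t"
  have mono: "?q a \<le> ?q b" if "0 < a" "a \<le> b" for a b
  proof (cases "a = b")
    case False
    with that have "(h 0 - h b) / b \<le> (h 0 - h a) / a"
      using convex_on_slope_le(1)[OF h, of 0 b a] by simp
    then show ?thesis
      by (simp add: diff_divide_distrib)
  qed simp
  have bnd: "h 0 - h (-1) \<le> ?q t" if "0 < t" for t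
    using that convex_on_slope_le[OF h, of "-1" t 0] by (simp add: diff_divide_distrib)
  have "(?q \<longlongrightarrow> Inf (?q ` ({0<..} \<inter> UNIV))) (at 0 within ({0<..} \<inter> UNIV))"
    by (rule Lim_right_bound[where K = "h 0 - h (-1)"]) (auto intro: mono bnd)
  then have lim: "(?q \<longlongrightarrow> Inf (?q ` {0<..})) (at_right 0)"
    by simp
  moreover have "Inf (?q ` {0<..}) \<le> ?q 1"
  proof (rule tendsto_upperbound[OF lim])
    show "\<forall>\<^sub>F t in at_right 0. ?q t \<le> ?q 1"
      unfolding eventually_at_right_field by (intro exI[of _ 1]) (use mono[of _ 1] in auto)
  qed simp
  ultimately show ?thesis
    by auto
qed

lemma has_vector_derivative_along_line:
  assumes "(F has_derivative F') (at x)"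
  shows "((\<lambda>t. F (x + t *\<^sub>R s)) has_vector_derivative F' s) (at 0)"
proof -
  have "((\<lambda>t. x + t *\<^sub>R s) has_derivative (\<lambda>t. t *\<^sub>R s)) (at 0)"
    by (auto intro!: derivative_eq_intros)
  from has_derivative_compose[OF this] assms
  have "((\<lambda>t. F (x + t *\<^sub>R s)) has_derivative (\<lambda>t. F' (t *\<^sub>R s))) (at 0)"
    by simp
  moreover have "F' (t *\<^sub>R s) = t *\<^sub>R F' s" for t
    using linear_scale[OF bounded_linear.linear[OF has_derivative_bounded_linear[OF assms]]] .
  ultimately show ?thesis
    by (simp add: has_vector_derivative_def)
qed

lemma has_vector_derivative_right_quotient:
  assumes "(\<gamma> has_vector_derivative d) (at 0)"
  shows "((\<lambda>t. (\<gamma> t - \<gamma> 0) /\<^sub>R t) \<longlongrightarrow> d) (at_right 0)"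
proof (rule LIM_zero_cancel)
  have "(\<gamma> has_derivative (\<lambda>t. t *\<^sub>R d)) (at_right 0)"
    using assms unfolding has_vector_derivative_def by (rule has_derivative_at_withinI)
  then have "((\<lambda>t. ((\<gamma> t - \<gamma> 0) - t *\<^sub>R d) /\<^sub>R norm t) \<longlongrightarrow> 0) (at_right 0)"
    by (simp add: has_derivative_at_within)
  moreover have "\<forall>\<^sub>F t in at_right 0. ((\<gamma> t - \<gamma> 0) - t *\<^sub>R d) /\<^sub>R norm t = (\<gamma> t - \<gamma> 0) /\<^sub>R t - d"
    using eventually_at_right_less[of "0::real"] by eventually_elim (simp add: algebra_simps)
  ultimately show "((\<lambda>t. (\<gamma> t - \<gamma> 0) /\<^sub>R t - d) \<longlongrightarrow> 0) (at_right 0)"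
    by (rule Lim_transform_eventually)
qed

lemma norm_right_quotient_linearization:
  assumes "(\<gamma> has_vector_derivative d) (at 0)"
  shows "((\<lambda>t. (norm (\<gamma> t) - norm (\<gamma> 0 + t *\<^sub>R d)) / t) \<longlongrightarrow> 0) (at_right 0)"
proof (rule Lim_null_comparison)
  show "((\<lambda>t. norm ((\<gamma> t - \<gamma> 0) /\<^sub>R t - d)) \<longlongrightarrow> 0) (at_right 0)"
    using tendsto_norm_zero[OF LIM_zero[OF has_vector_derivative_right_quotient[OF assms]]] .
  show "\<forall>\<^sub>F t in at_right 0. norm ((norm (\<gamma> t) - norm (\<gamma> 0 + t *\<^sub>R d)) / t)
      \<le> norm ((\<gamma> t - \<gamma> 0) /\<^sub>R t - d)"
    using eventually_at_right_less[of "0::real"]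
  proof eventually_elim
    case (elim t)
    have "norm ((norm (\<gamma> t) - norm (\<gamma> 0 + t *\<^sub>R d)) / t) = \<bar>norm (\<gamma> t) - norm (\<gamma> 0 + t *\<^sub>R d)\<bar> / t"
      using elim by simp
    also have "\<dots> \<le> norm (\<gamma> t - (\<gamma> 0 + t *\<^sub>R d)) / t"
      using elim by (intro divide_right_mono norm_triangle_ineq3) simp
    also have "\<dots> = norm ((\<gamma> t - (\<gamma> 0 + t *\<^sub>R d)) /\<^sub>R t)"
      using elim by (simp add: divide_inverse_commute)
    also have "(\<gamma> t - (\<gamma> 0 + t *\<^sub>R d)) /\<^sub>R t = (\<gamma> t - \<gamma> 0) /\<^sub>R t - d"
      using elim by (simp add: scaleR_diff_right scaleR_add_right)
    finally show ?case .
  qed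
qed

lemma merit_right_slope_le:
  fixes f :: "real^'n \<Rightarrow> real" and c :: "real^'n \<Rightarrow> real^'m"
  assumes prob: "problem_data f g c J r" and \<tau>: "\<tau> \<ge> 0"
  shows "\<exists>D. ((\<lambda>t. (merit f r c \<tau> (x + t *\<^sub>R s) - merit f r c \<tau> x) / t) \<longlongrightarrow> D) (at_right 0) \<and>
     D \<le> \<tau> * (g x \<bullet> s + r (x + s) - r x) + norm (c x + J x *v s) - norm (c x)"
proof -
  from prob have f: "(f has_derivative (\<lambda>h. g x \<bullet> h)) (at x)"
    and c: "(c has_derivative (\<lambda>h. J x *v h)) (at x)" and r: "convex_on UNIV r"
    unfolding problem_data_def by auto
  have f_slope: "((\<lambda>t. (f (x + t *\<^sub>R s) - f x) / t) \<longlongrightarrow> g x \<bullet> s) (at_right 0)"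
    using has_vector_derivative_right_quotient[OF has_vector_derivative_along_line[OF f]]
    by (simp add: divide_inverse_commute)
  have c_slope: "((\<lambda>t. (norm (c (x + t *\<^sub>R s)) - norm (c x + t *\<^sub>R (J x *v s))) / t) \<longlongrightarrow> 0) (at_right 0)"
    using norm_right_quotient_linearization[OF has_vector_derivative_along_line[OF c]] by simp
  define h where "h t = \<tau> * r (x + t *\<^sub>R s) + norm (c x + t *\<^sub>R (J x *v s))" for t
  have "convex_on UNIV h"
    unfolding h_def using \<tau> convex_on_affine_comp[OF r linear_scaleR_left, of x]
      convex_on_affine_comp[OF convex_on_UNIV_norm linear_scaleR_left, of "c x"]
    by (intro convex_on_add convex_on_cmul)
  then obtain L where L: "((\<lambda>t. (h t - h 0) / t) \<longlongrightarrow> L) (at_right 0)" "L \<le> h 1 - h 0"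
    using convex_right_slope_tendsto by blast
  have "((\<lambda>t. \<tau> * ((f (x + t *\<^sub>R s) - f x) / t) + (h t - h 0) / t
      + (norm (c (x + t *\<^sub>R s)) - norm (c x + t *\<^sub>R (J x *v s))) / t) \<longlongrightarrow> \<tau> * (g x \<bullet> s) + L + 0)
      (at_right 0)"
    by (intro tendsto_intros f_slope L(1) c_slope)
  moreover have "(\<lambda>t. \<tau> * ((f (x + t *\<^sub>R s) - f x) / t) + (h t - h 0) / t
      + (norm (c (x + t *\<^sub>R s)) - norm (c x + t *\<^sub>R (J x *v s))) / t)
      = (\<lambda>t. (merit f r c \<tau> (x + t *\<^sub>R s) - merit f r c \<tau> x) / t)"
    by (simp add: merit_def h_def diff_divide_distrib add_divide_distrib algebra_simps)
  moreover have "\<tau> * (g x \<bullet> s) + L + 0 \<le> \<tau> * (g x \<bullet> s + r (x + s) - r x) + norm (c x + J x *v s) - norm (c x)"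
    using L(2) by (simp add: h_def algebra_simps)
  ultimately show ?thesis
    by auto
qed

lemma prox_step_descent:
  fixes a u :: "'a::real_inner"
  assumes \<phi>: "convex_on UNIV \<phi>" and \<alpha>: "\<alpha> > 0"
    and min: "\<And>t. 0 \<le> t \<Longrightarrow> t < 1 \<Longrightarrow>
      a \<bullet> u + 1 / (2 * \<alpha>) * (norm u)\<^sup>2 + \<phi> u
        \<le> a \<bullet> (t *\<^sub>R u) + 1 / (2 * \<alpha>) * (norm (t *\<^sub>R u))\<^sup>2 + \<phi> (t *\<^sub>R u)"
  shows "a \<bullet> u + (norm u)\<^sup>2 / \<alpha> + \<phi> u - \<phi> 0 \<le> 0"
proof -
  define A where "A = a \<bullet> u + \<phi> u - \<phi> 0"
  define B where "B = 1 / (2 * \<alpha>) * (norm u)\<^sup>2"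
  have bound: "A + (1 + t) * B \<le> 0" if t: "0 \<le> t" "t < 1" for t
  proof -
    have "\<phi> (t *\<^sub>R u) \<le> (1 - t) * \<phi> 0 + t * \<phi> u"
      using convex_onD[OF \<phi>, of t 0 u] t by simp
    moreover have "1 / (2 * \<alpha>) * (norm (t *\<^sub>R u))\<^sup>2 = t\<^sup>2 * B"
      using t by (simp add: B_def power_mult_distrib)
    then have "a \<bullet> u + B + \<phi> u \<le> t * (a \<bullet> u) + t\<^sup>2 * B + \<phi> (t *\<^sub>R u)"
      using min[OF t] unfolding B_def[symmetric] by simp
    ultimately have "a \<bullet> u + B + \<phi> u \<le> t * (a \<bullet> u) + t\<^sup>2 * B + (1 - t) * \<phi> 0 + t * \<phi> u"
      by linarith
    moreover have "(1 - t) * (A + (1 + t) * B)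
        = (a \<bullet> u + B + \<phi> u) - (t * (a \<bullet> u) + t\<^sup>2 * B + (1 - t) * \<phi> 0 + t * \<phi> u)"
      by (simp add: A_def algebra_simps power2_eq_square)
    ultimately have "(1 - t) * (A + (1 + t) * B) \<le> 0"
      by linarith
    with t show ?thesis
      by (simp add: mult_le_0_iff)
  qed
  have "((\<lambda>t. A + (1 + t) * B) \<longlongrightarrow> A + (1 + 1) * B) (at_left 1)"
    by (intro tendsto_intros)
  then have "A + (1 + 1) * B \<le> 0"
    by (rule tendsto_upperbound)
      (auto simp: eventually_at_left_field intro!: exI[of _ 0] bound)
  then show ?thesis
    using \<alpha> by (simp add: A_def B_def)
qed

lemma cauchy_step_decrease:
  fixes c w :: "'a::real_inner"
  assumes cw: "c \<bullet> w > 0" and B: "B > 0" and \<beta>: "0 \<le> \<beta>" "\<beta> \<le> B"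
    and min: "\<And>\<beta>'. 0 \<le> \<beta>' \<Longrightarrow> \<beta>' \<le> B \<Longrightarrow> norm (c - \<beta> *\<^sub>R w) \<le> norm (c - \<beta>' *\<^sub>R w)"
  shows "norm (c - \<beta> *\<^sub>R w) < norm c"
proof -
  have ww: "w \<bullet> w > 0"
    using cw by (cases "w = 0") auto
  \<comment> \<open>the exact minimizer along w, clipped to [0, B]\<close>
  define b where "b = min B ((c \<bullet> w) / (w \<bullet> w))"
  have b: "0 < b" "b \<le> B" "b * (w \<bullet> w) \<le> c \<bullet> w"
    using B cw ww by (auto simp: b_def min_def field_simps)
  have "(norm (c - b *\<^sub>R w))\<^sup>2 = (norm c)\<^sup>2 - 2 * b * (c \<bullet> w) + b * (b * (w \<bullet> w))"
    by (simp add: power2_norm_eq_inner inner_diff_left inner_diff_right inner_commute algebra_simps)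
  also have "\<dots> \<le> (norm c)\<^sup>2 - b * (c \<bullet> w)"
    using mult_left_mono[OF b(3), of b] b(1) by simp
  also have "\<dots> < (norm c)\<^sup>2"
    using b(1) cw by simp
  finally have "norm (c - b *\<^sub>R w) < norm c"
    by (rule power_less_imp_less_base) simp
  then show ?thesis
    using min[of b] b by linarith
qed

lemma normal_step_decrease:
  fixes c :: "real^'n \<Rightarrow> real^'m" and J :: "real^'n \<Rightarrow> real^'n^'m"
  assumes ns: "normal_step_ok c J \<kappa>v \<alpha> x v" and \<kappa>v: "\<kappa>v > 0" and \<alpha>: "\<alpha> > 0"
  shows "norm (c x + J x *v v) \<le> norm (c x)"
    and "norm (c x + J x *v v) = norm (c x) \<Longrightarrow> v = 0"
proof -
  have strict: "norm (c x + J x *v v) < norm (c x)" if nz: "transpose (J x) *v c x \<noteq> 0"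
  proof -
    define d where "d = transpose (J x) *v c x"
    from ns nz obtain \<beta> where \<beta>: "0 \<le> \<beta>" "\<beta> \<le> \<kappa>v * \<alpha>"
      and \<beta>_min: "\<And>\<beta>'. 0 \<le> \<beta>' \<Longrightarrow> \<beta>' \<le> \<kappa>v * \<alpha> \<Longrightarrow>
        (1/2) * (norm (c x - \<beta> *\<^sub>R (J x *v d)))\<^sup>2 \<le> (1/2) * (norm (c x - \<beta>' *\<^sub>R (J x *v d)))\<^sup>2"
      and v: "norm (c x + J x *v v) \<le> norm (c x + J x *v (- \<beta> *\<^sub>R d))"
      unfolding normal_step_ok_def Let_def d_def by auto
    have "c x \<bullet> (J x *v d) = d \<bullet> d"
      by (simp add: d_def dot_lmul_matrix[symmetric])
    then have "c x \<bullet> (J x *v d) > 0"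
      using nz by (simp add: d_def)
    then have "norm (c x - \<beta> *\<^sub>R (J x *v d)) < norm (c x)"
    proof (rule cauchy_step_decrease[OF _ _ \<beta>])
      show "\<kappa>v * \<alpha> > 0"
        using \<kappa>v \<alpha> by simp
      fix \<beta>' :: real
      assume "0 \<le> \<beta>'" "\<beta>' \<le> \<kappa>v * \<alpha>"
      from \<beta>_min[OF this] have "(norm (c x - \<beta> *\<^sub>R (J x *v d)))\<^sup>2 \<le> (norm (c x - \<beta>' *\<^sub>R (J x *v d)))\<^sup>2"
        by simp
      then show "norm (c x - \<beta> *\<^sub>R (J x *v d)) \<le> norm (c x - \<beta>' *\<^sub>R (J x *v d))"
        by (rule power2_le_imp_le) simp
    qed
    moreover have "J x *v (- \<beta> *\<^sub>R d) = - (\<beta> *\<^sub>R (J x *v d))"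
      by (subst matrix_vector_mult_scaleR) simp
    ultimately show ?thesis
      using v by simp
  qed
  have "v = 0" if "transpose (J x) *v c x = 0"
    using ns that by (simp add: normal_step_ok_def)
  with strict show "norm (c x + J x *v v) \<le> norm (c x)"
    and "norm (c x + J x *v v) = norm (c x) \<Longrightarrow> v = 0"
    by (cases "transpose (J x) *v c x = 0"; force)+
qed

lemma tau_update_bound:
  assumes \<tau>p: "\<tau>p > 0" and \<epsilon>: "\<epsilon> < 1" and \<sigma>: "\<sigma> < 1" and Dl: "Dl \<ge> 0" "D > 0 \<Longrightarrow> Dl > 0"
    and \<tau>: "\<tau> = tau_update \<epsilon> \<tau>p (if D \<le> 0 then \<infinity> else ereal ((1 - \<sigma>) * Dl / D))"
  shows "\<tau> > 0" and "\<tau> * D \<le> (1 - \<sigma>) * Dl"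
proof -
  have "\<tau> > 0 \<and> \<tau> * D \<le> (1 - \<sigma>) * Dl"
  proof (cases "D \<le> 0")
    case True
    then have "\<tau> = \<tau>p"
      using \<tau> by (simp add: tau_update_def)
    with True \<tau>p \<sigma> Dl(1) show ?thesis
      by (simp add: mult_nonneg_nonpos order_trans[of _ 0])
  next
    case False
    define T where "T = (1 - \<sigma>) * Dl / D"
    have "T > 0"
      using False \<sigma> Dl by (simp add: T_def)
    moreover have "\<tau> = (if \<tau>p \<le> T then \<tau>p else min ((1 - \<epsilon>) * \<tau>p) T)"
      using \<tau> False by (simp add: tau_update_def T_def)
    ultimately have "\<tau> > 0 \<and> \<tau> \<le> T"
      using \<tau>p \<epsilon> by (auto simp: min_def)
    then show ?thesis
      using False by (simp add: T_def pos_le_divide_eq)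
  qed
  then show "\<tau> > 0" and "\<tau> * D \<le> (1 - \<sigma>) * Dl"
    by auto
qed

lemma iteration_model_reduction:
  fixes c :: "real^'n \<Rightarrow> real^'m" and J :: "real^'n \<Rightarrow> real^'n^'m"
  assumes r: "convex_on UNIV r"
    and \<kappa>v: "\<kappa>v > 0" and \<sigma>c: "\<sigma>c < 1" and \<epsilon>\<tau>: "\<epsilon>\<tau> < 1"
    and \<sigma>u: "\<sigma>u \<le> 1/2" and \<alpha>: "\<alpha> > 0" and \<tau>p: "\<tau>p > 0"
    and ns: "normal_step_ok c J \<kappa>v \<alpha> x v" and ts: "tangential_step_ok g r J \<alpha> x v u"
    and s: "s = v + u"
    and \<tau>: "\<tau> = tau_update \<epsilon>\<tau> \<tau>p (tau_trial g r c J \<sigma>c \<sigma>u \<alpha> x v s)"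
  shows "\<tau> > 0"
    and "dq g r c J \<alpha> x s \<tau> \<ge> \<sigma>u * \<tau> / \<alpha> * (norm s)\<^sup>2 + \<sigma>c * (norm (c x) - norm (c x + J x *v v))"
proof -
  define Dl where "Dl = norm (c x) - norm (c x + J x *v v)"
  define D where "D = g x \<bullet> s + (\<sigma>u + 1/2) * (norm s)\<^sup>2 / \<alpha> + r (x + s) - r x"
  have Dl: "Dl \<ge> 0"
    using normal_step_decrease(1)[OF ns \<kappa>v \<alpha>] by (simp add: Dl_def)
  have Ju: "J x *v u = 0"
    and u_min: "\<And>w. J x *v w = 0 \<Longrightarrow> w \<noteq> u \<Longrightarrow>
      g x \<bullet> u + 1 / (2 * \<alpha>) * (norm u)\<^sup>2 + r (x + v + u) < g x \<bullet> w + 1 / (2 * \<alpha>) * (norm w)\<^sup>2 + r (x + v + w)"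
    using ts unfolding tangential_step_ok_def Let_def by auto
  have prox: "g x \<bullet> u + (norm u)\<^sup>2 / \<alpha> + r (x + v + u) - r (x + v + 0) \<le> 0"
  proof (rule prox_step_descent[OF convex_on_affine_comp[OF r linear_ident] \<alpha>])
    fix t :: real
    have "J x *v (t *\<^sub>R u) = 0"
      by (simp add: matrix_vector_mult_scaleR Ju)
    then show "g x \<bullet> u + 1 / (2 * \<alpha>) * (norm u)\<^sup>2 + r (x + v + u)
        \<le> g x \<bullet> (t *\<^sub>R u) + 1 / (2 * \<alpha>) * (norm (t *\<^sub>R u))\<^sup>2 + r (x + v + t *\<^sub>R u)"
      using u_min[of "t *\<^sub>R u"] by (cases "t *\<^sub>R u = u") auto
  qed
  have Dl_pos: "Dl > 0" if "D > 0"
  proof (rule ccontr)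
    assume "\<not> Dl > 0"
    then have "v = 0"
      using Dl normal_step_decrease(2)[OF ns \<kappa>v \<alpha>] by (simp add: Dl_def)
    moreover have "(\<sigma>u + 1/2) * ((norm s)\<^sup>2 / \<alpha>) \<le> (norm s)\<^sup>2 / \<alpha>"
      using mult_right_mono[of "\<sigma>u + 1/2" 1 "(norm s)\<^sup>2 / \<alpha>"] \<sigma>u \<alpha> by simp
    ultimately have "D \<le> 0"
      using prox s by (simp add: D_def)
    with that show False
      by simp
  qed
  have "tau_trial g r c J \<sigma>c \<sigma>u \<alpha> x v s = (if D \<le> 0 then \<infinity> else ereal ((1 - \<sigma>c) * Dl / D))"
    by (simp add: tau_trial_def Let_def D_def Dl_def)
  note \<tau>D = tau_update_bound[OF \<tau>p \<epsilon>\<tau> \<sigma>c Dl Dl_pos \<tau>[unfolded this]]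
  show "\<tau> > 0"
    by (rule \<tau>D(1))
  have "J x *v s = J x *v v"
    using Ju s by (simp add: matrix_vector_right_distrib)
  then have "dq g r c J \<alpha> x s \<tau> = \<sigma>u * \<tau> / \<alpha> * (norm s)\<^sup>2 + Dl - \<tau> * D"
    using \<alpha> by (simp add: dq_def Dl_def D_def field_simps)
  with \<tau>D(2) show "dq g r c J \<alpha> x s \<tau> \<ge> \<sigma>u * \<tau> / \<alpha> * (norm s)\<^sup>2 + \<sigma>c * (norm (c x) - norm (c x + J x *v v))"
    by (simp add: Dl_def algebra_simps)
qed

lemma merit_descent_from_model_reduction:
  fixes f :: "real^'n \<Rightarrow> real" and c :: "real^'n \<Rightarrow> real^'m"
  assumes prob: "problem_data f g c J r" and \<tau>: "\<tau> > 0" and \<alpha>: "\<alpha> > 0"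
    and \<sigma>: "\<sigma>u > 0" "\<sigma>c \<ge> 0" and s: "s \<noteq> 0" and Dl: "Dl \<ge> 0"
    and dq: "dq g r c J \<alpha> x s \<tau> \<ge> \<sigma>u * \<tau> / \<alpha> * (norm s)\<^sup>2 + \<sigma>c * Dl"
  shows "\<sigma>u * \<tau> / \<alpha> * (norm s)\<^sup>2 + \<sigma>c * Dl > 0"
    and "\<exists>D. ((\<lambda>t. (merit f r c \<tau> (x + t *\<^sub>R s) - merit f r c \<tau> x) / t) \<longlongrightarrow> D) (at_right 0) \<and>
      D \<le> - \<sigma>u * \<tau> / \<alpha> * (norm s)\<^sup>2 - \<sigma>c * Dl \<and>
      - \<sigma>u * \<tau> / \<alpha> * (norm s)\<^sup>2 - \<sigma>c * Dl < 0"
proof -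
  show pos: "\<sigma>u * \<tau> / \<alpha> * (norm s)\<^sup>2 + \<sigma>c * Dl > 0"
    using \<tau> \<alpha> \<sigma> s Dl by (simp add: add_pos_nonneg)
  then have neg: "- \<sigma>u * \<tau> / \<alpha> * (norm s)\<^sup>2 - \<sigma>c * Dl < 0"
    by simp
  obtain D where D: "((\<lambda>t. (merit f r c \<tau> (x + t *\<^sub>R s) - merit f r c \<tau> x) / t) \<longlongrightarrow> D) (at_right 0)"
    "D \<le> \<tau> * (g x \<bullet> s + r (x + s) - r x) + norm (c x + J x *v s) - norm (c x)"
    using merit_right_slope_le[OF prob] \<tau> by (meson less_imp_le)
  have "\<tau> * (g x \<bullet> s + r (x + s) - r x) + norm (c x + J x *v s) - norm (c x)
      = - dq g r c J \<alpha> x s \<tau> - \<tau> * (norm s)\<^sup>2 / (2 * \<alpha>)"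
    by (simp add: dq_def algebra_simps)
  moreover have "\<tau> * (norm s)\<^sup>2 / (2 * \<alpha>) \<ge> 0"
    using \<tau> \<alpha> by simp
  ultimately have "D \<le> - \<sigma>u * \<tau> / \<alpha> * (norm s)\<^sup>2 - \<sigma>c * Dl"
    using D(2) dq by simp
  with D(1) neg show "\<exists>D. ((\<lambda>t. (merit f r c \<tau> (x + t *\<^sub>R s) - merit f r c \<tau> x) / t) \<longlongrightarrow> D) (at_right 0) \<and>
      D \<le> - \<sigma>u * \<tau> / \<alpha> * (norm s)\<^sup>2 - \<sigma>c * Dl \<and>
      - \<sigma>u * \<tau> / \<alpha> * (norm s)\<^sup>2 - \<sigma>c * Dl < 0"
    by blast
qed

theorem lemma3p4:
  fixes f :: "real^'n \<Rightarrow> real" and g :: "real^'n \<Rightarrow> real^'n"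
    and c :: "real^'n \<Rightarrow> real^'m" and J :: "real^'n \<Rightarrow> real^'n^'m"
    and r :: "real^'n \<Rightarrow> real"
    and \<kappa>v \<sigma>c \<epsilon>\<tau> \<xi> \<eta> \<sigma>u \<alpha>0 \<tau>0 :: real and x0 :: "real^'n"
    and x v u s :: "nat \<Rightarrow> real^'n" and \<alpha> \<tau> :: "nat \<Rightarrow> real"
  assumes prob: "problem_data f g c J r"
    and params: "\<kappa>v > 0" "0 < \<sigma>c" "\<sigma>c < 1" "0 < \<epsilon>\<tau>" "\<epsilon>\<tau> < 1" "0 < \<xi>" "\<xi> < 1"
      "0 < \<eta>" "\<eta> < 1" "0 < \<sigma>u" "\<sigma>u \<le> 1/2"
    and init: "\<alpha>0 > 0" "\<tau>0 > 0"
    and run: "alg_run f g c J r \<kappa>v \<sigma>c \<epsilon>\<tau> \<xi> \<eta> \<sigma>u x0 \<alpha>0 \<tau>0 x \<alpha> \<tau> v u s"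
    and nonterm: "no_termination c J x s"
    and standing: "standing_assumption f g c J r x s"
  shows "\<forall>k.
     dq g r c J (\<alpha> k) (x k) (s k) (\<tau> k)
       \<ge> \<sigma>u * \<tau> k / \<alpha> k * (norm (s k))^2 + \<sigma>c * (norm (c (x k)) - norm (c (x k) + J (x k) *v v k)) \<and>
     \<sigma>u * \<tau> k / \<alpha> k * (norm (s k))^2 + \<sigma>c * (norm (c (x k)) - norm (c (x k) + J (x k) *v v k)) > 0 \<and>
     (\<exists>D. ((\<lambda>t. (merit f r c (\<tau> k) (x k + t *\<^sub>R s k) - merit f r c (\<tau> k) (x k)) / t) \<longlongrightarrow> D) (at_right 0) \<and>
          D \<le> - \<sigma>u * \<tau> k / \<alpha> k * (norm (s k))^2 - \<sigma>c * (norm (c (x k)) - norm (c (x k) + J (x k) *v v k)) \<and>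
          - \<sigma>u * \<tau> k / \<alpha> k * (norm (s k))^2 - \<sigma>c * (norm (c (x k)) - norm (c (x k) + J (x k) *v v k)) < 0)"
proof -
  have r: "convex_on UNIV r"
    using prob by (simp add: problem_data_def)
  have \<alpha>_0: "\<alpha> 0 = \<alpha>0"
    and ns: "\<And>k. normal_step_ok c J \<kappa>v (\<alpha> k) (x k) (v k)"
    and ts: "\<And>k. tangential_step_ok g r J (\<alpha> k) (x k) (v k) (u k)"
    and s: "\<And>k. s k = v k + u k"
    and \<tau>: "\<And>k. \<tau> k = tau_update \<epsilon>\<tau> (if k = 0 then \<tau>0 else \<tau> (k - 1))
      (tau_trial g r c J \<sigma>c \<sigma>u (\<alpha> k) (x k) (v k) (s k))"
    and \<alpha>_Suc: "\<And>k. \<alpha> (Suc k) = \<alpha> k \<or> \<alpha> (Suc k) = \<xi> * \<alpha> k"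
    using run unfolding alg_run_def by (blast, blast, blast, blast, blast, metis)
  have \<alpha>_pos: "\<alpha> k > 0" for k
  proof (induction k)
    case 0
    show ?case
      using \<alpha>_0 init(1) by simp
  next
    case (Suc k)
    then show ?case
      using \<alpha>_Suc[of k] params(6) by auto
  qed
  have \<tau>_prev: "(if k = 0 then \<tau>0 else \<tau> (k - 1)) > 0" for k
    by (induction k)
      (auto simp: init(2) intro: iteration_model_reduction(1)[OF r params(1,3,5,11) \<alpha>_pos _ ns ts s \<tau>])
  note model = iteration_model_reduction[OF r params(1,3,5,11) \<alpha>_pos \<tau>_prev ns ts s \<tau>]
  have Dl: "norm (c (x k)) - norm (c (x k) + J (x k) *v v k) \<ge> 0" for k
    using normal_step_decrease(1)[OF ns params(1) \<alpha>_pos] by simp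
  have "s k \<noteq> 0" for k
    using nonterm by (simp add: no_termination_def)
  note descent = merit_descent_from_model_reduction[OF prob model(1) \<alpha>_pos params(10)
      less_imp_le[OF params(2)] this Dl model(2)]
  show ?thesis
    using model(2) descent by blast
qed

end
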